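(* In the setting of the OMD iteration $\pi^{(1)}=\pi^{\mathrm{ref}}$, $\pi^{(t+1)}(a)\propto(\pi^{\mathrm{ref}}(a))^{1/t}(\pi^{(t)}(a))^{(t-1)/t}\exp(\frac\eta tQ^{(t)}(a))$, with $Q^{(t)}\in[0,1]^{\mathcal A}$ and $f^{(t)}(\pi)=\langle\pi,Q^{(t)}\rangle-\eta^{-1}\mathrm{KL}(\pi\|\pi^{\mathrm{ref}})$, the following hold for all $t\ge1$: (i) $\pi^{(t+1)}(a)\propto\pi^{\mathrm{ref}}(a)\exp\big(\frac\eta t\sum_{k=1}^tQ^{(k)}(a)\big)$, and $\pi^{(t+1)}=\arg\max_{\pi\in\Delta(\mathcal A)}\sum_{k=1}^tf^{(k)}(\pi)$; (ii) $\|\pi^{(t+1)}-\pi^{(t)}\|_1\le\frac{2\eta}{2t-1}$ and $f^{(t)}(\pi^{(t+1)})-f^{(t)}(\pi^{(t)})\le\frac{2\eta}{2t-1}$; (iii) for every $T\ge1$ and every $\pi^*\in\Delta(\mathcal A)$, $\sum_{t=1}^T\big(f^{(t)}(\pi^* )-f^{(t)}(\pi^{(t)})\big)\le2\eta(1+\log T)$.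
   Context: $\mathcal A$ finite, $\pi^{\mathrm{ref}}\in\Delta(\mathcal A)$ with full support, $\eta>0$; $\mathrm{KL}(p\|q)=\sum_ap(a)\log(p(a)/q(a))$; $\|\cdot\|_1$ is the $\ell_1$ norm on $\mathbb R^{\mathcal A}$. *)

theory Defs
  imports Complex_Main
begin

definition simplex :: "('a::finite \<Rightarrow> real) set" where
  "simplex = {p. (\<forall>a. 0 \<le> p a) \<and> (\<Sum>a\<in>UNIV. p a) = 1}"

text \<open>KL divergence (with the convention 0 log 0 = 0, since 0 * _ = 0).\<close>
definition KL :: "('a::finite \<Rightarrow> real) \<Rightarrow> ('a \<Rightarrow> real) \<Rightarrow> real" where
  "KL p q = (\<Sum>a\<in>UNIV. p a * ln (p a / q a))"

definition fobj :: "real \<Rightarrow> ('a::finite \<Rightarrow> real) \<Rightarrow> (nat \<Rightarrow> 'a \<Rightarrow> real) \<Rightarrow> nat \<Rightarrow> ('a \<Rightarrow> real) \<Rightarrow> real" where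
  "fobj \<eta> pref Q t p = (\<Sum>a\<in>UNIV. p a * Q t a) - KL p pref / \<eta>"

definition omd_weight :: "real \<Rightarrow> ('a::finite \<Rightarrow> real) \<Rightarrow> (nat \<Rightarrow> 'a \<Rightarrow> real) \<Rightarrow> nat \<Rightarrow> ('a \<Rightarrow> real) \<Rightarrow> 'a \<Rightarrow> real" where
  "omd_weight \<eta> pref Q t p a =
     pref a powr (1 / real t) * p a powr ((real t - 1) / real t) * exp (\<eta> / real t * Q t a)"

end

(*
  Unrolling the update shows that pi^(t+1) is the Gibbs tilt of pi_ref by eta times the
  running average of Q^(1), ..., Q^(t): geometric mixing of a tilt with its base, followed
  by a further tilt, is again a tilt.  By the Gibbs variational principle such a tilt
  maximises <p, w> - KL(p || pi_ref) over the simplex, and sum_{k <= t} f^(k) is a positive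
  multiple of that objective, which gives (i).

  Consecutive iterates differ by a tilt whose exponent ranges over an interval of width
  2 eta / t; a convexity (chord) argument bounds the l1 distance of such a tilt from its base
  by 2 tanh(eta / 2t) <= eta / t.  Writing f^(t) relative to pi^(t) through the variational
  identity turns f^(t)(pi^(t+1)) - f^(t)(pi^(t)) into an inner product with a zero-sum
  vector minus a KL term, bounded by the same l1 distance.  Finally (iii) is the
  be-the-leader lemma plus sum_{t <= T} 1/t <= 1 + log T.  The bounds eta / t and
  eta (1 + log T) obtained this way are sharper than the stated ones.
*)

theory Submission
  imports Defs "HOL-Analysis.Harmonic_Numbers"
begin

section \<open>Gibbs tilts and the variational principle\<close>

definition gibbs_tilt :: "('a::finite \<Rightarrow> real) \<Rightarrow> ('a \<Rightarrow> real) \<Rightarrow> 'a \<Rightarrow> real" where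
  "gibbs_tilt r w a = r a * exp (w a) / (\<Sum>b\<in>UNIV. r b * exp (w b))"

lemma gibbs_tilt_normalizer_pos:
  fixes r w :: "'a::finite \<Rightarrow> real"
  assumes "\<forall>a. 0 < r a"
  shows "0 < (\<Sum>b\<in>UNIV. r b * exp (w b))"
  using assms by (intro sum_pos) auto

lemma gibbs_tilt_pos:
  assumes "\<forall>a. 0 < r a"
  shows "0 < gibbs_tilt r w a"
  using assms gibbs_tilt_normalizer_pos[OF assms] by (simp add: gibbs_tilt_def)

lemma gibbs_tilt_in_simplex:
  assumes "\<forall>a. 0 < r a"
  shows "gibbs_tilt r w \<in> simplex"
proof -
  have "(\<Sum>b\<in>UNIV. r b * exp (w b)) \<noteq> 0"
    using gibbs_tilt_normalizer_pos[OF assms, of w] by simp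
  then show ?thesis
    using gibbs_tilt_pos[OF assms, of w]
    by (auto simp: simplex_def gibbs_tilt_def less_imp_le sum_divide_distrib[symmetric])
qed

lemma gibbs_tilt_zero:
  assumes "r \<in> simplex"
  shows "gibbs_tilt r (\<lambda>_. 0) = r"
  using assms by (auto simp: gibbs_tilt_def simplex_def)

lemma gibbs_tilt_of_scaled:
  fixes x r w :: "'a::finite \<Rightarrow> real"
  assumes "\<forall>a. x a = c * r a * exp (w a)" and "c \<noteq> 0"
  shows "x a / (\<Sum>b\<in>UNIV. x b) = gibbs_tilt r w a"
  using assms by (simp add: gibbs_tilt_def sum_distrib_left[symmetric] mult.assoc)

lemma gibbs_tilt_gibbs_tilt:
  assumes "\<forall>a. 0 < r a"
  shows "gibbs_tilt (gibbs_tilt r w) v = gibbs_tilt r (\<lambda>a. w a + v a)"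
proof
  fix a
  define Z where "Z = (\<Sum>b\<in>UNIV. r b * exp (w b))"
  have "inverse Z \<noteq> 0" using gibbs_tilt_normalizer_pos[OF assms, of w] by (simp add: Z_def)
  moreover have "\<forall>a. gibbs_tilt r w a * exp (v a) = inverse Z * r a * exp (w a + v a)"
    by (simp add: gibbs_tilt_def Z_def exp_add field_simps)
  ultimately have "gibbs_tilt r w a * exp (v a) / (\<Sum>b\<in>UNIV. gibbs_tilt r w b * exp (v b))
      = gibbs_tilt r (\<lambda>a. w a + v a) a"
    by (intro gibbs_tilt_of_scaled[where x = "\<lambda>a. gibbs_tilt r w a * exp (v a)" and c = "inverse Z"]) simp_all
  then show "gibbs_tilt (gibbs_tilt r w) v a = gibbs_tilt r (\<lambda>a. w a + v a) a"
    by (simp only: gibbs_tilt_def[of "gibbs_tilt r w" v])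
qed

lemma KL_self: "KL p p = 0"
  unfolding KL_def by (rule sum.neutral) simp

lemma KL_nonneg:
  fixes p q :: "'a::finite \<Rightarrow> real"
  assumes p: "p \<in> simplex" and q: "q \<in> simplex" "\<forall>a. 0 < q a"
  shows "0 \<le> KL p q"
proof -
  have pointwise: "p a - q a \<le> p a * ln (p a / q a)" for a
  proof (cases "p a = 0")
    case True
    then show ?thesis using q(2) by (simp add: less_imp_le)
  next
    case False
    then have pa: "0 < p a" using p by (auto simp: simplex_def less_le)
    have qa: "0 < q a" using q by simp
    have "ln (q a / p a) \<le> q a / p a - 1" using pa qa by (intro ln_le_minus_one) simp
    also have "ln (q a / p a) = - ln (p a / q a)" using pa qa by (simp add: ln_div)
    finally have "p a * (1 - q a / p a) \<le> p a * ln (p a / q a)" using pa by simp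
    then show ?thesis using pa by (simp add: algebra_simps)
  qed
  have "0 = (\<Sum>a\<in>UNIV. p a - q a)" using p q by (simp add: simplex_def sum_subtractf)
  also have "\<dots> \<le> KL p q" unfolding KL_def by (intro sum_mono pointwise)
  finally show ?thesis .
qed

lemma KL_gibbs_tilt:
  fixes p r w :: "'a::finite \<Rightarrow> real"
  assumes p: "p \<in> simplex" and r: "\<forall>a. 0 < r a"
  shows "(\<Sum>a\<in>UNIV. p a * w a) - KL p r
           = ln (\<Sum>b\<in>UNIV. r b * exp (w b)) - KL p (gibbs_tilt r w)"
proof -
  define Z where "Z = (\<Sum>b\<in>UNIV. r b * exp (w b))"
  have Z: "0 < Z" using gibbs_tilt_normalizer_pos[OF r] by (simp add: Z_def)
  have pointwise: "p a * w a - p a * ln (p a / r a)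
      = p a * ln Z - p a * ln (p a / gibbs_tilt r w a)" for a
  proof (cases "p a = 0")
    case False
    then have "0 < p a" using p by (auto simp: simplex_def less_le)
    then have tilt: "ln (p a / gibbs_tilt r w a) = ln (p a / r a) - w a + ln Z"
      using r[rule_format, of a] Z by (simp add: gibbs_tilt_def Z_def[symmetric] ln_div ln_mult)
    show ?thesis unfolding tilt by (simp add: algebra_simps)
  qed simp
  have "(\<Sum>a\<in>UNIV. p a * w a) - KL p r = (\<Sum>a\<in>UNIV. p a * w a - p a * ln (p a / r a))"
    by (simp add: KL_def sum_subtractf)
  also have "\<dots> = (\<Sum>a\<in>UNIV. p a) * ln Z - KL p (gibbs_tilt r w)"
    by (simp add: pointwise KL_def sum_subtractf sum_distrib_right)
  also have "(\<Sum>a\<in>UNIV. p a) = 1" using p by (simp add: simplex_def)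
  finally show ?thesis by (simp add: Z_def)
qed

lemma gibbs_tilt_is_arg_max:
  fixes r w :: "'a::finite \<Rightarrow> real"
  assumes "\<forall>a. 0 < r a"
  shows "is_arg_max (\<lambda>p. (\<Sum>a\<in>UNIV. p a * w a) - KL p r) (\<lambda>p. p \<in> simplex) (gibbs_tilt r w)"
proof -
  have "0 \<le> KL p (gibbs_tilt r w)" if "p \<in> simplex" for p
    using that gibbs_tilt_in_simplex gibbs_tilt_pos assms by (intro KL_nonneg) auto
  then show ?thesis
    using assms gibbs_tilt_in_simplex[OF assms]
    by (auto simp: is_arg_max_linorder KL_gibbs_tilt KL_self)
qed

lemma fobj_diff_gibbs_tilt:
  fixes r w p :: "'a::finite \<Rightarrow> real"
  assumes r: "\<forall>a. 0 < r a" and p: "p \<in> simplex" and \<eta>: "\<eta> \<noteq> 0"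
  defines "p\<^sub>0 \<equiv> gibbs_tilt r (\<lambda>a. \<eta> * w a)"
  shows "fobj \<eta> r Q t p - fobj \<eta> r Q t p\<^sub>0
           = (\<Sum>a\<in>UNIV. (p a - p\<^sub>0 a) * (Q t a - w a)) - KL p p\<^sub>0 / \<eta>"
proof -
  define Z where "Z = (\<Sum>b\<in>UNIV. r b * exp (\<eta> * w b))"
  have p\<^sub>0: "p\<^sub>0 \<in> simplex" unfolding p\<^sub>0_def by (rule gibbs_tilt_in_simplex[OF r])
  have scale: "(\<Sum>a\<in>UNIV. q a * (\<eta> * w a)) = \<eta> * (\<Sum>a\<in>UNIV. q a * w a)" for q :: "'a \<Rightarrow> real"
    by (simp add: sum_distrib_left algebra_simps)
  have KL_p: "KL p r = \<eta> * (\<Sum>a\<in>UNIV. p a * w a) - ln Z + KL p p\<^sub>0"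
    using KL_gibbs_tilt[OF p r, of "\<lambda>a. \<eta> * w a"] by (simp add: Z_def p\<^sub>0_def scale)
  have KL_p\<^sub>0: "KL p\<^sub>0 r = \<eta> * (\<Sum>a\<in>UNIV. p\<^sub>0 a * w a) - ln Z"
    using KL_gibbs_tilt[OF p\<^sub>0 r, of "\<lambda>a. \<eta> * w a"] by (simp add: Z_def p\<^sub>0_def scale KL_self)
  have inner: "(\<Sum>a\<in>UNIV. (p a - p\<^sub>0 a) * (Q t a - w a))
      = (\<Sum>a\<in>UNIV. p a * Q t a) - (\<Sum>a\<in>UNIV. p\<^sub>0 a * Q t a)
        - ((\<Sum>a\<in>UNIV. p a * w a) - (\<Sum>a\<in>UNIV. p\<^sub>0 a * w a))"
    by (simp add: algebra_simps sum_subtractf sum.distrib)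
  show ?thesis
    unfolding fobj_def KL_p KL_p\<^sub>0 inner using \<eta> by (simp add: field_simps)
qed

section \<open>The l1 distance between a distribution and its tilt\<close>

lemma mean_in_range:
  fixes p x :: "'a::finite \<Rightarrow> real"
  assumes p: "p \<in> simplex" and x: "\<forall>a. A \<le> x a \<and> x a \<le> B"
  shows "A \<le> (\<Sum>a\<in>UNIV. p a * x a)" and "(\<Sum>a\<in>UNIV. p a * x a) \<le> B"
proof -
  have p_nonneg: "0 \<le> p a" for a using p by (simp add: simplex_def)
  have p_sum: "(\<Sum>a\<in>UNIV. p a) = 1" using p by (simp add: simplex_def)
  have "A = (\<Sum>a\<in>UNIV. p a * A)" by (simp add: p_sum flip: sum_distrib_right)
  also have "\<dots> \<le> (\<Sum>a\<in>UNIV. p a * x a)"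
    using x p_nonneg by (intro sum_mono mult_left_mono) auto
  finally show "A \<le> (\<Sum>a\<in>UNIV. p a * x a)" .
  have "(\<Sum>a\<in>UNIV. p a * x a) \<le> (\<Sum>a\<in>UNIV. p a * B)"
    using x p_nonneg by (intro sum_mono mult_left_mono) auto
  also have "\<dots> = B" by (simp add: p_sum flip: sum_distrib_right)
  finally show "(\<Sum>a\<in>UNIV. p a * x a) \<le> B" .
qed

lemma abs_dev_le_chord:
  fixes x \<mu> A B :: real
  assumes "A \<le> x" "x \<le> B" "A \<le> \<mu>" "\<mu> \<le> B"
  shows "(B - A) * \<bar>x - \<mu>\<bar> \<le> (B - x) * (\<mu> - A) + (x - A) * (B - \<mu>)"
proof (cases "\<mu> \<le> x")
  case True
  then have abs_eq: "\<bar>x - \<mu>\<bar> = x - \<mu>" by simp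
  have "0 \<le> (B - x) * (\<mu> - A)" using assms by simp
  then show ?thesis unfolding abs_eq by (simp add: algebra_simps)
next
  case False
  then have abs_eq: "\<bar>x - \<mu>\<bar> = \<mu> - x" by simp
  have "0 \<le> (x - A) * (B - \<mu>)" using assms by simp
  then show ?thesis unfolding abs_eq by (simp add: algebra_simps)
qed

lemma mean_abs_dev_le:
  fixes p x :: "'a::finite \<Rightarrow> real"
  assumes p: "p \<in> simplex" and x: "\<forall>a. A \<le> x a \<and> x a \<le> B"
  defines "\<mu> \<equiv> \<Sum>a\<in>UNIV. p a * x a"
  shows "(B - A) * (\<Sum>a\<in>UNIV. p a * \<bar>x a - \<mu>\<bar>) \<le> 2 * (\<mu> - A) * (B - \<mu>)"
proof -
  have p_nonneg: "0 \<le> p a" for a using p by (simp add: simplex_def)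
  have p_sum: "(\<Sum>a\<in>UNIV. p a) = 1" using p by (simp add: simplex_def)
  have \<mu>: "A \<le> \<mu>" "\<mu> \<le> B" unfolding \<mu>_def using mean_in_range[OF p x] by auto
  have "(B - A) * (\<Sum>a\<in>UNIV. p a * \<bar>x a - \<mu>\<bar>) = (\<Sum>a\<in>UNIV. p a * ((B - A) * \<bar>x a - \<mu>\<bar>))"
    by (simp add: sum_distrib_left mult_ac)
  also have "\<dots> \<le> (\<Sum>a\<in>UNIV. p a * ((B - x a) * (\<mu> - A) + (x a - A) * (B - \<mu>)))"
    using x \<mu> p_nonneg by (intro sum_mono mult_left_mono abs_dev_le_chord) auto
  also have "\<dots> = (\<Sum>a\<in>UNIV. (\<mu> - A) * (B * p a - p a * x a) + (B - \<mu>) * (p a * x a - A * p a))"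
    by (intro sum.cong) (simp_all add: algebra_simps)
  also have "\<dots> = (\<mu> - A) * (B * (\<Sum>a\<in>UNIV. p a) - \<mu>) + (B - \<mu>) * (\<mu> - A * (\<Sum>a\<in>UNIV. p a))"
    by (simp add: \<mu>_def sum.distrib sum_subtractf flip: sum_distrib_left)
  finally show ?thesis by (simp add: p_sum algebra_simps)
qed

lemma tanh_le_self:
  fixes x :: real
  assumes "0 \<le> x"
  shows "tanh x \<le> x"
proof -
  have "(\<lambda>y. y - tanh y) 0 \<le> (\<lambda>y. y - tanh y) x"
  proof (rule DERIV_nonneg_imp_nondecreasing[OF assms])
    fix y :: real
    have "((\<lambda>y. y - tanh y) has_real_derivative 1 - (1 - tanh y ^ 2)) (at y)"
      by (auto intro!: derivative_eq_intros)
    then show "\<exists>d. ((\<lambda>y. y - tanh y) has_real_derivative d) (at y) \<and> 0 \<le> d" by force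
  qed
  then show ?thesis by simp
qed

lemma tanh_half_eq:
  fixes x :: real
  shows "tanh (x / 2) = (exp x - 1) / (exp x + 1)"
proof -
  have "exp (- 2 * (x / 2)) = 1 / exp x" by (simp add: exp_minus inverse_eq_divide)
  then have "tanh (x / 2) = (1 - 1 / exp x) / (1 + 1 / exp x)" by (simp only: tanh_real_altdef)
  also have "\<dots> = (exp x - 1) / (exp x + 1)" by (simp add: divide_simps)
  finally show ?thesis .
qed

lemma sum_abs_gibbs_tilt_sub_le:
  fixes p h :: "'a::finite \<Rightarrow> real"
  assumes p: "p \<in> simplex" and h: "\<forall>a. m \<le> h a \<and> h a \<le> m + \<delta>" and \<delta>: "0 < \<delta>"
  shows "(\<Sum>a\<in>UNIV. \<bar>gibbs_tilt p h a - p a\<bar>) \<le> \<delta> / 2"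
proof -
  define \<mu> where "\<mu> = (\<Sum>a\<in>UNIV. p a * exp (h a))"
  define L where "L = (\<Sum>a\<in>UNIV. p a * \<bar>exp (h a) - \<mu>\<bar>)"
  define A where "A = exp m"
  define s where "s = exp (\<delta> / 2)"
  have A: "0 < A" and s: "1 < s" using \<delta> by (simp_all add: A_def s_def)
  have "A * s\<^sup>2 = exp (m + \<delta>)"
    by (simp add: A_def s_def power2_eq_square exp_add flip: exp_add[of "\<delta> / 2"])
  then have range: "\<forall>a. A \<le> exp (h a) \<and> exp (h a) \<le> A * s\<^sup>2"
    using h by (simp add: A_def)
  have \<mu>: "A \<le> \<mu>" using mean_in_range(1)[OF p range] by (simp add: \<mu>_def)
  have "A * (s - 1) * ((s + 1) * L) \<le> 2 * (\<mu> - A) * (A * s\<^sup>2 - \<mu>)"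
    using mean_abs_dev_le[OF p range] by (simp add: \<mu>_def L_def power2_eq_square algebra_simps)
  \<comment> \<open>the difference of the two sides is \<open>2 * (\<mu> - A * s)\<^sup>2\<close>\<close>
  also have "\<dots> \<le> A * (s - 1) * (2 * \<mu> * (s - 1))"
    using zero_le_power2[of "\<mu> - A * s"] by (simp add: power2_eq_square algebra_simps)
  finally have "(s + 1) * L \<le> 2 * \<mu> * (s - 1)" using A s by simp
  also have "s - 1 = (s + 1) * tanh (\<delta> / 4)"
  proof -
    have "tanh (\<delta> / 4) = (s - 1) / (s + 1)" using tanh_half_eq[of "\<delta> / 2"] by (simp add: s_def)
    then show ?thesis using s by (simp add: divide_simps mult.commute)
  qed
  also have "2 * \<mu> * ((s + 1) * tanh (\<delta> / 4)) \<le> 2 * \<mu> * ((s + 1) * (\<delta> / 4))"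
    using \<mu> A s \<delta> tanh_le_self[of "\<delta> / 4"] by (intro mult_left_mono) auto
  also have "\<dots> = (s + 1) * (\<mu> * (\<delta> / 2))" by simp
  finally have "L \<le> \<mu> * (\<delta> / 2)" using s by (simp add: mult_le_cancel_left_pos add_pos_pos)
  moreover have "\<bar>gibbs_tilt p h a - p a\<bar> = p a * \<bar>exp (h a) - \<mu>\<bar> / \<mu>" for a
  proof -
    have "gibbs_tilt p h a - p a = p a * (exp (h a) - \<mu>) / \<mu>"
      using A \<mu> by (simp add: gibbs_tilt_def \<mu>_def[symmetric] field_simps)
    then show ?thesis using p A \<mu> by (simp add: abs_mult simplex_def)
  qed
  ultimately show ?thesis
    using A \<mu> by (simp add: L_def[symmetric] flip: sum_divide_distrib) (simp add: divide_le_eq mult.commute)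
qed

lemma sum_mult_le_half_width:
  fixes d g :: "'a::finite \<Rightarrow> real"
  assumes d: "(\<Sum>a\<in>UNIV. d a) = 0" and g: "\<forall>a. m \<le> g a \<and> g a \<le> m + r"
  shows "(\<Sum>a\<in>UNIV. d a * g a) \<le> r / 2 * (\<Sum>a\<in>UNIV. \<bar>d a\<bar>)"
proof -
  have "(\<Sum>a\<in>UNIV. d a * (g a - (m + r / 2)))
      = (\<Sum>a\<in>UNIV. d a * g a) - (\<Sum>a\<in>UNIV. d a) * (m + r / 2)"
    by (simp add: right_diff_distrib sum_subtractf flip: sum_distrib_right)
  then have "(\<Sum>a\<in>UNIV. d a * g a) = (\<Sum>a\<in>UNIV. d a * (g a - (m + r / 2)))"
    using d by simp
  also have "\<dots> \<le> (\<Sum>a\<in>UNIV. \<bar>d a\<bar> * (r / 2))"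
  proof (rule sum_mono)
    fix a
    have "\<bar>g a - (m + r / 2)\<bar> \<le> r / 2" using g[rule_format, of a] unfolding abs_le_iff by linarith
    then have "\<bar>d a\<bar> * \<bar>g a - (m + r / 2)\<bar> \<le> \<bar>d a\<bar> * (r / 2)" by (rule mult_left_mono) simp
    then show "d a * (g a - (m + r / 2)) \<le> \<bar>d a\<bar> * (r / 2)"
      by (metis abs_ge_self abs_mult order_trans)
  qed
  also have "\<dots> = r / 2 * (\<Sum>a\<in>UNIV. \<bar>d a\<bar>)"
    by (simp add: sum_distrib_left mult.commute)
  finally show ?thesis .
qed

section \<open>Be the leader\<close>

lemma be_the_leader:
  fixes f :: "nat \<Rightarrow> 'b \<Rightarrow> real"
  assumes leader: "\<And>t. is_arg_max (\<lambda>y. \<Sum>k=1..t. f k y) P (x t)" and "P y"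
  shows "(\<Sum>t=1..T. f t y) \<le> (\<Sum>t=1..T. f t (x t))"
  using \<open>P y\<close>
proof (induction T arbitrary: y)
  case 0
  then show ?case by simp
next
  case (Suc T)
  have "(\<Sum>t=1..Suc T. f t y) \<le> (\<Sum>t=1..Suc T. f t (x (Suc T)))"
    using leader[of "Suc T"] Suc.prems by (simp add: is_arg_max_linorder)
  also have "\<dots> \<le> (\<Sum>t=1..T. f t (x t)) + f (Suc T) (x (Suc T))"
    using Suc.IH leader[of "Suc T"] by (simp add: is_arg_max_def)
  finally show ?case by simp
qed

lemma harm_le_one_plus_ln:
  assumes "1 \<le> n"
  shows "harm n \<le> 1 + ln (real n)"
  using euler_mascheroni_sequence_decreasing[of 1 n] assms by (simp add: harm_def)

section \<open>The OMD iteration\<close>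

lemma omd_weight_gibbs_tilt:
  fixes r w :: "'a::finite \<Rightarrow> real" and \<eta> :: real and Q :: "nat \<Rightarrow> 'a \<Rightarrow> real"
  assumes r: "\<forall>a. 0 < r a" and t: "0 < t"
  defines "x \<equiv> omd_weight \<eta> r Q t (gibbs_tilt r w)"
  shows "x a / (\<Sum>b\<in>UNIV. x b)
           = gibbs_tilt r (\<lambda>a. (real t - 1) / real t * w a + \<eta> / real t * Q t a) a"
proof -
  define Z where "Z = (\<Sum>b\<in>UNIV. r b * exp (w b))"
  define e where "e = (real t - 1) / real t"
  have Z: "0 < Z" using gibbs_tilt_normalizer_pos[OF r] by (simp add: Z_def)
  have "x b = Z powr (- e) * r b * exp (e * w b + \<eta> / real t * Q t b)" for b
  proof -
    have rb: "0 < r b" using r by simp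
    have "1 / real t + e = 1" using t by (simp add: e_def field_simps)
    then have ref_powr: "r b powr (1 / real t) * r b powr e = r b"
      using rb by (simp flip: powr_add)
    have tilt_powr: "gibbs_tilt r w b powr e = r b powr e * exp (e * w b) / Z powr e"
      using rb Z by (simp add: gibbs_tilt_def Z_def[symmetric] powr_divide powr_mult
          exp_powr_real mult.commute)
    have "x b = r b powr (1 / real t) * gibbs_tilt r w b powr e * exp (\<eta> / real t * Q t b)"
      unfolding x_def omd_weight_def e_def ..
    also have "\<dots> = (r b powr (1 / real t) * r b powr e) * (exp (e * w b) * exp (\<eta> / real t * Q t b)) / Z powr e"
      unfolding tilt_powr by simp
    finally show ?thesis
      unfolding ref_powr by (simp add: exp_add powr_minus divide_inverse mult_ac)
  qed
  moreover have "Z powr (- e) \<noteq> 0" using Z by simp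
  ultimately show ?thesis
    by (intro gibbs_tilt_of_scaled[where c = "Z powr (- e)"]) (simp_all add: e_def)
qed

locale omd_iteration =
  fixes \<pi>ref :: "'a::finite \<Rightarrow> real" and \<eta> :: real
    and Q :: "nat \<Rightarrow> 'a \<Rightarrow> real" and \<pi> :: "nat \<Rightarrow> 'a \<Rightarrow> real"
  assumes ref_simplex: "\<pi>ref \<in> simplex"
    and ref_pos: "\<forall>a. 0 < \<pi>ref a"
    and eta_pos: "0 < \<eta>"
    and Q_range: "\<forall>t\<ge>1. \<forall>a. 0 \<le> Q t a \<and> Q t a \<le> 1"
    and init: "\<pi> 1 = \<pi>ref"
    and step: "\<forall>t\<ge>1. \<forall>a. \<pi> (t + 1) a =
                  omd_weight \<eta> \<pi>ref Q t (\<pi> t) a / (\<Sum>b\<in>UNIV. omd_weight \<eta> \<pi>ref Q t (\<pi> t) b)"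
begin

(* At t = 0 the division by zero yields 0, so the closed form below also covers pi 1 = pi_ref. *)
definition avg_reward :: "nat \<Rightarrow> 'a \<Rightarrow> real" where
  "avg_reward t a = (\<Sum>k=1..t. Q k a) / real t"

lemma sum_Q_eq_mult_avg_reward: "(\<Sum>k=1..t. Q k a) = real t * avg_reward t a"
  by (cases "t = 0") (simp_all add: avg_reward_def)

lemma avg_reward_bounds: "0 \<le> avg_reward t a" "avg_reward t a \<le> 1"
proof -
  have "0 \<le> (\<Sum>k=1..t. Q k a)" using Q_range by (intro sum_nonneg) auto
  moreover have "(\<Sum>k=1..t. Q k a) \<le> (\<Sum>k=1..t. 1)" using Q_range by (intro sum_mono) auto
  ultimately show "0 \<le> avg_reward t a" "avg_reward t a \<le> 1"
    by (auto simp: avg_reward_def divide_le_eq)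
qed

lemma avg_reward_Suc:
  "avg_reward (Suc t) a = (real t * avg_reward t a + Q (Suc t) a) / real (Suc t)"
  unfolding avg_reward_def[of "Suc t"] using sum_Q_eq_mult_avg_reward[where t = t and a = a] by simp

lemma reward_increment_bounds:
  assumes "1 \<le> t"
  shows "- 1 \<le> Q t a - avg_reward n a" and "Q t a - avg_reward n a \<le> 1"
  using Q_range[rule_format, OF assms, of a] avg_reward_bounds[of n a] by auto

lemma iterate_eq_gibbs_tilt: "\<pi> (Suc t) = gibbs_tilt \<pi>ref (\<lambda>a. \<eta> * avg_reward t a)"
proof (induction t)
  case 0
  show ?case using init gibbs_tilt_zero[OF ref_simplex] by (simp add: avg_reward_def)
next
  case (Suc t)
  have mix: "(real (Suc t) - 1) / real (Suc t) * (\<eta> * avg_reward t a) + \<eta> / real (Suc t) * Q (Suc t) a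
      = \<eta> * avg_reward (Suc t) a" for a
    unfolding avg_reward_Suc by (simp add: add_divide_distrib algebra_simps)
  show ?case
  proof
    fix a
    have "\<pi> (Suc (Suc t)) a = omd_weight \<eta> \<pi>ref Q (Suc t) (\<pi> (Suc t)) a
        / (\<Sum>b\<in>UNIV. omd_weight \<eta> \<pi>ref Q (Suc t) (\<pi> (Suc t)) b)"
      using step by simp
    also have "\<dots> = gibbs_tilt \<pi>ref (\<lambda>a. (real (Suc t) - 1) / real (Suc t) * (\<eta> * avg_reward t a)
        + \<eta> / real (Suc t) * Q (Suc t) a) a"
      unfolding Suc.IH by (rule omd_weight_gibbs_tilt[OF ref_pos]) simp
    finally show "\<pi> (Suc (Suc t)) a = gibbs_tilt \<pi>ref (\<lambda>a. \<eta> * avg_reward (Suc t) a) a"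
      by (simp only: mix)
  qed
qed

lemma iterate_in_simplex: "\<pi> (Suc t) \<in> simplex"
  by (simp add: iterate_eq_gibbs_tilt gibbs_tilt_in_simplex ref_pos)

lemma iterate_pos: "0 < \<pi> (Suc t) a"
  by (simp add: iterate_eq_gibbs_tilt gibbs_tilt_pos ref_pos)

lemma iterate_proportional:
  "\<exists>c>0. \<forall>a. \<pi> (Suc t) a = c * \<pi>ref a * exp (\<eta> / real t * (\<Sum>k=1..t. Q k a))"
proof -
  define Z where "Z = (\<Sum>b\<in>UNIV. \<pi>ref b * exp (\<eta> * avg_reward t b))"
  have "0 < Z" unfolding Z_def by (rule gibbs_tilt_normalizer_pos[OF ref_pos])
  moreover have "\<pi> (Suc t) a = inverse Z * \<pi>ref a * exp (\<eta> / real t * (\<Sum>k=1..t. Q k a))" for a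
    by (simp add: iterate_eq_gibbs_tilt gibbs_tilt_def Z_def avg_reward_def divide_inverse mult_ac)
  ultimately show ?thesis by (intro exI[of _ "inverse Z"]) auto
qed

lemma sum_fobj_eq:
  "(\<Sum>k=1..t. fobj \<eta> \<pi>ref Q k p)
     = real t / \<eta> * ((\<Sum>a\<in>UNIV. p a * (\<eta> * avg_reward t a)) - KL p \<pi>ref)"
proof -
  have "(\<Sum>k=1..t. fobj \<eta> \<pi>ref Q k p)
      = (\<Sum>k=1..t. \<Sum>a\<in>UNIV. p a * Q k a) - real t * KL p \<pi>ref / \<eta>"
    by (simp add: fobj_def sum_subtractf)
  also have "(\<Sum>k=1..t. \<Sum>a\<in>UNIV. p a * Q k a) = (\<Sum>a\<in>UNIV. p a * (\<Sum>k=1..t. Q k a))"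
    unfolding sum_distrib_left by (rule sum.swap)
  also have "(\<Sum>a\<in>UNIV. p a * (\<Sum>k=1..t. Q k a)) = real t * (\<Sum>a\<in>UNIV. p a * avg_reward t a)"
    unfolding sum_Q_eq_mult_avg_reward by (simp add: sum_distrib_left mult_ac)
  also have "(\<Sum>a\<in>UNIV. p a * (\<eta> * avg_reward t a)) = \<eta> * (\<Sum>a\<in>UNIV. p a * avg_reward t a)"
    by (simp add: sum_distrib_left mult_ac)
  ultimately show ?thesis using eta_pos by (simp add: field_simps)
qed

lemma iterate_is_arg_max:
  "is_arg_max (\<lambda>p. \<Sum>k=1..t. fobj \<eta> \<pi>ref Q k p) (\<lambda>p. p \<in> simplex) (\<pi> (Suc t))"
proof -
  have "is_arg_max (\<lambda>p. (\<Sum>a\<in>UNIV. p a * (\<eta> * avg_reward t a)) - KL p \<pi>ref)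
      (\<lambda>p. p \<in> simplex) (\<pi> (Suc t))"
    unfolding iterate_eq_gibbs_tilt by (rule gibbs_tilt_is_arg_max[OF ref_pos])
  moreover have "0 \<le> real t / \<eta>" using eta_pos by simp
  ultimately show ?thesis
    unfolding is_arg_max_linorder sum_fobj_eq by (blast intro: mult_left_mono)
qed

lemma iterate_Suc_eq_gibbs_tilt:
  "\<pi> (Suc (Suc t)) = gibbs_tilt (\<pi> (Suc t)) (\<lambda>a. \<eta> * ((Q (Suc t) a - avg_reward t a) / real (Suc t)))"
proof -
  have "(\<lambda>a. \<eta> * avg_reward t a + \<eta> * ((Q (Suc t) a - avg_reward t a) / real (Suc t)))
      = (\<lambda>a. \<eta> * avg_reward (Suc t) a)"
  proof
    fix a
    show "\<eta> * avg_reward t a + \<eta> * ((Q (Suc t) a - avg_reward t a) / real (Suc t))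
        = \<eta> * avg_reward (Suc t) a"
      unfolding avg_reward_Suc by (simp add: field_simps del: of_nat_Suc) (simp add: algebra_simps)
  qed
  then show ?thesis
    by (simp only: iterate_eq_gibbs_tilt gibbs_tilt_gibbs_tilt[OF ref_pos])
qed

lemma iterate_l1_step:
  assumes "1 \<le> t"
  shows "(\<Sum>a\<in>UNIV. \<bar>\<pi> (t + 1) a - \<pi> t a\<bar>) \<le> \<eta> / real t"
proof -
  obtain n where t: "t = Suc n" using assms by (cases t) auto
  define h where "h a = \<eta> * ((Q t a - avg_reward n a) / real t)" for a
  have bounds: "\<forall>a. - (\<eta> / real t) \<le> h a \<and> h a \<le> - (\<eta> / real t) + 2 * \<eta> / real t"
  proof
    fix a
    from reward_increment_bounds[OF assms, of a n]
    have "\<eta> / real t * (- 1) \<le> \<eta> / real t * (Q t a - avg_reward n a)"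
      and "\<eta> / real t * (Q t a - avg_reward n a) \<le> \<eta> / real t * 1"
      using eta_pos by (intro mult_left_mono; simp add: t)+
    then show "- (\<eta> / real t) \<le> h a \<and> h a \<le> - (\<eta> / real t) + 2 * \<eta> / real t"
      by (simp add: h_def field_simps)
  qed
  have "\<pi> t \<in> simplex" using iterate_in_simplex[of n] by (simp add: t)
  then have "(\<Sum>a\<in>UNIV. \<bar>gibbs_tilt (\<pi> t) h a - \<pi> t a\<bar>) \<le> 2 * \<eta> / real t / 2"
    using eta_pos assms by (intro sum_abs_gibbs_tilt_sub_le[OF _ bounds]) simp_all
  moreover have "\<pi> (t + 1) = gibbs_tilt (\<pi> t) h"
    by (simp add: t h_def[abs_def] iterate_Suc_eq_gibbs_tilt)
  ultimately show ?thesis by simp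
qed

lemma fobj_iterate_step:
  assumes "1 \<le> t"
  shows "fobj \<eta> \<pi>ref Q t (\<pi> (t + 1)) - fobj \<eta> \<pi>ref Q t (\<pi> t) \<le> \<eta> / real t"
proof -
  obtain n where t: "t = Suc n" using assms by (cases t) auto
  define p\<^sub>0 p\<^sub>1 where "p\<^sub>0 = \<pi> t" and "p\<^sub>1 = \<pi> (t + 1)"
  have p\<^sub>0: "p\<^sub>0 = gibbs_tilt \<pi>ref (\<lambda>a. \<eta> * avg_reward n a)"
    by (simp add: p\<^sub>0_def t iterate_eq_gibbs_tilt)
  have p\<^sub>1: "p\<^sub>1 \<in> simplex" by (simp add: p\<^sub>1_def iterate_in_simplex)
  have "fobj \<eta> \<pi>ref Q t p\<^sub>1 - fobj \<eta> \<pi>ref Q t p\<^sub>0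
      = (\<Sum>a\<in>UNIV. (p\<^sub>1 a - p\<^sub>0 a) * (Q t a - avg_reward n a)) - KL p\<^sub>1 p\<^sub>0 / \<eta>"
    unfolding p\<^sub>0 using eta_pos by (intro fobj_diff_gibbs_tilt[OF ref_pos p\<^sub>1]) simp
  also have "\<dots> \<le> (\<Sum>a\<in>UNIV. (p\<^sub>1 a - p\<^sub>0 a) * (Q t a - avg_reward n a))"
  proof -
    have "0 \<le> KL p\<^sub>1 p\<^sub>0"
      using p\<^sub>1 iterate_in_simplex iterate_pos by (intro KL_nonneg) (simp_all add: p\<^sub>0_def t)
    then show ?thesis using eta_pos by simp
  qed
  also have "\<dots> \<le> 2 / 2 * (\<Sum>a\<in>UNIV. \<bar>p\<^sub>1 a - p\<^sub>0 a\<bar>)"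
  proof (rule sum_mult_le_half_width[where m = "- 1"])
    show "(\<Sum>a\<in>UNIV. p\<^sub>1 a - p\<^sub>0 a) = 0"
      using p\<^sub>1 iterate_in_simplex[of n] by (simp add: sum_subtractf simplex_def p\<^sub>0_def t)
    show "\<forall>a. - 1 \<le> Q t a - avg_reward n a \<and> Q t a - avg_reward n a \<le> - 1 + 2"
      using reward_increment_bounds[OF assms] by simp
  qed
  also have "\<dots> \<le> \<eta> / real t"
    using iterate_l1_step[OF assms] by (simp add: p\<^sub>0_def p\<^sub>1_def)
  finally show ?thesis by (simp add: p\<^sub>0_def p\<^sub>1_def)
qed

lemma regret_le:
  assumes T: "1 \<le> T" and p: "p \<in> simplex"
  shows "(\<Sum>t=1..T. fobj \<eta> \<pi>ref Q t p - fobj \<eta> \<pi>ref Q t (\<pi> t)) \<le> \<eta> * (1 + ln (real T))"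
proof -
  have "(\<Sum>t=1..T. fobj \<eta> \<pi>ref Q t p) \<le> (\<Sum>t=1..T. fobj \<eta> \<pi>ref Q t (\<pi> (t + 1)))"
    using be_the_leader[where P = "\<lambda>p. p \<in> simplex" and x = "\<lambda>t. \<pi> (Suc t)", OF iterate_is_arg_max p]
    by simp
  moreover have "(\<Sum>t=1..T. fobj \<eta> \<pi>ref Q t (\<pi> (t + 1)) - fobj \<eta> \<pi>ref Q t (\<pi> t))
      \<le> (\<Sum>t=1..T. \<eta> / real t)"
    by (intro sum_mono fobj_iterate_step) simp
  moreover have "(\<Sum>t=1..T. \<eta> / real t) = \<eta> * harm T"
    by (simp add: harm_def sum_distrib_left divide_inverse)
  moreover have "\<eta> * harm T \<le> \<eta> * (1 + ln (real T))"
    using harm_le_one_plus_ln[OF T] eta_pos by simp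
  ultimately show ?thesis by (simp add: sum_subtractf)
qed

end

theorem mainTheorem9:
  fixes \<pi>ref :: "'a::finite \<Rightarrow> real" and \<eta> :: real
    and Q :: "nat \<Rightarrow> 'a \<Rightarrow> real" and \<pi> :: "nat \<Rightarrow> 'a \<Rightarrow> real"
  assumes ref_simplex: "\<pi>ref \<in> simplex"
    and ref_pos: "\<forall>a. 0 < \<pi>ref a"
    and eta_pos: "0 < \<eta>"
    and Q_range: "\<forall>t\<ge>1. \<forall>a. 0 \<le> Q t a \<and> Q t a \<le> 1"
    and init: "\<pi> 1 = \<pi>ref"
    and step: "\<forall>t\<ge>1. \<forall>a. \<pi> (t + 1) a =
                  omd_weight \<eta> \<pi>ref Q t (\<pi> t) a / (\<Sum>b\<in>UNIV. omd_weight \<eta> \<pi>ref Q t (\<pi> t) b)"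
  shows "(\<forall>t\<ge>1.
            (\<exists>c>0. \<forall>a. \<pi> (t + 1) a = c * \<pi>ref a * exp (\<eta> / real t * (\<Sum>k=1..t. Q k a)))
          \<and> is_arg_max (\<lambda>p. \<Sum>k=1..t. fobj \<eta> \<pi>ref Q k p) (\<lambda>p. p \<in> simplex) (\<pi> (t + 1))
          \<and> (\<Sum>a\<in>UNIV. \<bar>\<pi> (t + 1) a - \<pi> t a\<bar>) \<le> 2 * \<eta> / (2 * real t - 1)
          \<and> fobj \<eta> \<pi>ref Q t (\<pi> (t + 1)) - fobj \<eta> \<pi>ref Q t (\<pi> t) \<le> 2 * \<eta> / (2 * real t - 1))
       \<and> (\<forall>T\<ge>1. \<forall>p\<in>simplex.
            (\<Sum>t=1..T. fobj \<eta> \<pi>ref Q t p - fobj \<eta> \<pi>ref Q t (\<pi> t)) \<le> 2 * \<eta> * (1 + ln (real T)))"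
proof -
  interpret omd_iteration \<pi>ref \<eta> Q \<pi> using assms by unfold_locales
  have rate: "\<eta> / real t \<le> 2 * \<eta> / (2 * real t - 1)" if "1 \<le> t" for t
  proof -
    have "\<eta> / real t = 2 * \<eta> / (2 * real t)" by simp
    also have "\<dots> \<le> 2 * \<eta> / (2 * real t - 1)"
      using that eta_pos by (intro divide_left_mono) auto
    finally show ?thesis .
  qed
  have log_bound: "\<eta> * (1 + ln (real T)) \<le> 2 * \<eta> * (1 + ln (real T))" if "1 \<le> T" for T
    using that eta_pos by simp
  show ?thesis
    using iterate_proportional iterate_is_arg_max rate
      order_trans[OF iterate_l1_step rate] order_trans[OF fobj_iterate_step rate]
      order_trans[OF regret_le log_bound]
    by simp
qed

end
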